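(* Let $f:[0,1]\to[0,1]$ be a surjective continuous function that does not admit a splitting sequence. If $f$ admits two 2-cycles $\{s,t\}$ and $\{u,v\}$ with $s<t$, $u<v$ and $s<u$, then there is exactly one component $C$ of $f^{-1}([s,u])$ such that $f(C)=[s,u]$, and there is exactly one component $C'$ of $f^{-1}([v,t])$ such that $f(C')=[v,t]$.
   Context: A 2-cycle is a set $\{s,t\}$ with $s\ne t$, $f(s)=t$, $f(t)=s$. A sequence $(T_n)_{n\in\mathbb N}$ of closed intervals $T_n\subsetneq[0,1]$ (possibly degenerate) is tight if $f(T_{n+1})=T_n$ for every $n$ and $T_n$ is nondegenerate for all sufficiently large $n$. A tight sequence $(T_n)$, $T_n=[l_n,r_n]$, is a splitting sequence admitted by $f$ if there are an infinite set $N\subseteq\mathbb N$ and nondegenerate closed intervals $S_n\subseteq[0,1]$ ($n\in N$) with $S_n\cap T_n\subseteq\{l_n,r_n\}$ and $f(S_n)=f(T_n)$ for all $n\in N$. *)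

theory Defs
  imports "HOL-Analysis.Analysis"
begin

text \<open>Maps of the unit interval are modelled as functions real to real; only
their values on {0..1} matter.\<close>

definition two_cycle :: "(real \<Rightarrow> real) \<Rightarrow> real \<Rightarrow> real \<Rightarrow> bool" where
  "two_cycle f s t \<longleftrightarrow> s \<in> {0..1} \<and> t \<in> {0..1} \<and> s \<noteq> t \<and> f s = t \<and> f t = s"

definition closed_interval :: "real set \<Rightarrow> bool" where
  "closed_interval I \<longleftrightarrow> (\<exists>a b. a \<le> b \<and> I = {a..b})"

definition nondegenerate :: "real set \<Rightarrow> bool" where
  "nondegenerate I \<longleftrightarrow> (\<exists>a b. a < b \<and> I = {a..b})"

definition tight :: "(real \<Rightarrow> real) \<Rightarrow> (nat \<Rightarrow> real set) \<Rightarrow> bool" where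
  "tight f T \<longleftrightarrow>
     (\<forall>n. closed_interval (T n) \<and> T n \<subset> {0..1}) \<and>
     (\<forall>n. f ` T (Suc n) = T n) \<and>
     (\<exists>n0. \<forall>n\<ge>n0. nondegenerate (T n))"

definition splitting_sequence :: "(real \<Rightarrow> real) \<Rightarrow> (nat \<Rightarrow> real set) \<Rightarrow> bool" where
  "splitting_sequence f T \<longleftrightarrow> tight f T \<and>
     (\<exists>N S. infinite N \<and>
        (\<forall>n\<in>N. nondegenerate (S n) \<and> S n \<subseteq> {0..1} \<and>
                 S n \<inter> T n \<subseteq> {Inf (T n), Sup (T n)} \<and> f ` S n = f ` T n))"

definition admits_splitting_sequence :: "(real \<Rightarrow> real) \<Rightarrow> bool" where
  "admits_splitting_sequence f \<longleftrightarrow> (\<exists>T. splitting_sequence f T)"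

end

theory Submission
  imports Defs
begin

(*
  Let D \<subset> [0,1] be a nondegenerate interval and A a connected set with
  D \<subseteq> f(A) and A \<subseteq> f(D). Pulling D back alternately into A and into D gives a
  tight sequence, which is a splitting sequence as soon as every subinterval K of A
  with f(K) \<subseteq> D has a partner S, meeting K at most in its endpoints, with
  f(S) = f(K). Such partners exist when two distinct components of the preimage of D
  map onto D, or when an interval touching A only at its endpoints covers D.
  For the two 2-cycles, the image of [s,u] contains the segment between t and v and
  vice versa; the first alternative then gives the uniqueness of the components,
  and the second rules out t < v, so that [v,t] is a genuine interval.
*)

lemma closed_segment_image_subset:
  fixes f :: "real \<Rightarrow> real"
  assumes "continuous_on {0..1} f" "x \<in> {0..1}" "y \<in> {0..1}"
  shows "closed_segment (f x) (f y) \<subseteq> f ` closed_segment x y"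
proof -
  have "closed_segment x y \<subseteq> {0..1}"
    using assms(2,3) by (intro closed_segment_subset) auto
  then show ?thesis
    using IVT'_closed_segment_real[OF _ continuous_on_subset[OF assms(1)]] by blast
qed

lemma image_Icc_eq_Icc_if_attained_only_at_ends:
  fixes f :: "real \<Rightarrow> real"
  assumes cont: "continuous_on {c..d} f" and "c \<le> d" and fc: "f c = a" and fd: "f d = b" and "a \<le> b"
    and only_c: "\<And>x. x \<in> {c..d} \<Longrightarrow> f x = a \<Longrightarrow> x = c"
    and only_d: "\<And>x. x \<in> {c..d} \<Longrightarrow> f x = b \<Longrightarrow> x = d"
  shows "f ` {c..d} = {a..b}"
proof
  have cont': "continuous_on {x..y} f" if "c \<le> x" "y \<le> d" for x y
    using that by (intro continuous_on_subset[OF cont]) auto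
  show "f ` {c..d} \<subseteq> {a..b}"
  proof
    fix z assume "z \<in> f ` {c..d}"
    then obtain x where x: "x \<in> {c..d}" "z = f x"
      by blast
    have "\<not> f x < a"
    proof
      assume "f x < a"
      then obtain y where "x \<le> y" "y \<le> d" "f y = a"
        using IVT'[of f x a d] fd \<open>a \<le> b\<close> x cont'[of x d] by force
      with only_c[of y] x \<open>f x < a\<close> fc show False
        by (cases "x = c") auto
    qed
    moreover have "\<not> f x > b"
    proof
      assume "f x > b"
      then obtain y where "c \<le> y" "y \<le> x" "f y = b"
        using IVT'[of f c b x] fc \<open>a \<le> b\<close> x cont'[of c x] by force
      with only_d[of y] x \<open>f x > b\<close> fd show False
        by (cases "x = d") auto
    qed
    ultimately show "z \<in> {a..b}"
      using x by simp
  qed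
  show "{a..b} \<subseteq> f ` {c..d}"
    using IVT'[of f c _ d] fc fd \<open>c \<le> d\<close> cont by (fastforce simp: image_iff)
qed

lemma exists_Icc_image_eq_Icc:
  fixes f :: "real \<Rightarrow> real"
  assumes "p \<le> q" and cont: "continuous_on {p..q} f" and "f p = a" "f q = b" "a < b"
  obtains c d where "p \<le> c" "c < d" "d \<le> q" "f ` {c..d} = {a..b}"
proof -
  have level_compact: "compact {x \<in> {l..q}. f x = y}" if "p \<le> l" for l y
  proof (subst compact_eq_bounded_closed, intro conjI)
    show "bounded {x \<in> {l..q}. f x = y}"
      by (rule bounded_subset[of "{l..q}"]) auto
    show "closed {x \<in> {l..q}. f x = y}"
      using that by (intro continuous_closed_preimage_constant continuous_on_subset[OF cont]) auto
  qed
  obtain c where c: "c \<in> {p..q}" "f c = a"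
    and c_last: "\<And>x. x \<in> {p..q} \<Longrightarrow> f x = a \<Longrightarrow> x \<le> c"
    using compact_attains_sup[OF level_compact[of p a]] assms by fastforce
  obtain d where d: "d \<in> {c..q}" "f d = b"
    and d_first: "\<And>x. x \<in> {c..q} \<Longrightarrow> f x = b \<Longrightarrow> d \<le> x"
    using compact_attains_inf[OF level_compact[of c b]] c assms by fastforce
  have "c < d"
    using c d \<open>a < b\<close> by (cases "c = d") auto
  have "f ` {c..d} = {a..b}"
  proof (rule image_Icc_eq_Icc_if_attained_only_at_ends)
    show "continuous_on {c..d} f"
      using c d by (intro continuous_on_subset[OF cont]) auto
    show "x = c" if "x \<in> {c..d}" "f x = a" for x
      using c_last[of x] that c d by auto
    show "x = d" if "x \<in> {c..d}" "f x = b" for x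
      using d_first[of x] that d by auto
  qed (use c d \<open>c < d\<close> \<open>a < b\<close> in auto)
  with c d \<open>c < d\<close> show thesis
    using that by auto
qed

lemma exists_Icc_in_segment_image_eq_Icc:
  fixes f :: "real \<Rightarrow> real"
  assumes cont: "continuous_on (closed_segment p q) f" and "f p = a" "f q = b" "a < b"
  obtains c d where "c < d" "{c..d} \<subseteq> closed_segment p q" "f ` {c..d} = {a..b}"
proof (cases "p \<le> q")
  case True
  with cont have "continuous_on {p..q} f"
    by (simp add: closed_segment_eq_real_ivl)
  then obtain c d where "p \<le> c" "c < d" "d \<le> q" "f ` {c..d} = {a..b}"
    using exists_Icc_image_eq_Icc True assms(2-4) by blast
  with True show thesis
    using that by (auto simp: closed_segment_eq_real_ivl)
next
  case False
  with cont have "continuous_on {q..p} (\<lambda>x. - f x)"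
    by (intro continuous_intros) (simp add: closed_segment_eq_real_ivl)
  then obtain c d where cd: "q \<le> c" "c < d" "d \<le> p" "(\<lambda>x. - f x) ` {c..d} = {-b..-a}"
    using exists_Icc_image_eq_Icc[of q p "\<lambda>x. - f x" "-b" "-a"] False assms(2-4) by auto
  have "f ` {c..d} = uminus ` (\<lambda>x. - f x) ` {c..d}"
    by (simp add: image_image)
  also have "\<dots> = {a..b}"
    using cd(4) by simp
  finally show thesis
    using that cd False by (auto simp: closed_segment_eq_real_ivl)
qed

lemma nondegenerate_Icc: "c < d \<Longrightarrow> nondegenerate {c..d}"
  unfolding nondegenerate_def by blast

lemma exists_nondegenerate_preimage:
  fixes f :: "real \<Rightarrow> real"
  assumes cont: "continuous_on C f" and "connected C"
    and J: "nondegenerate J" "J \<subseteq> f ` C"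
  obtains K where "nondegenerate K" "K \<subseteq> C" "f ` K = J"
proof -
  obtain a b where ab: "a < b" "J = {a..b}"
    using J(1) by (auto simp: nondegenerate_def)
  then have "a \<in> f ` C" "b \<in> f ` C"
    using J(2) by auto
  then obtain p q where p: "p \<in> C" "f p = a" and q: "q \<in> C" "f q = b"
    by blast
  have "convex C"
    using \<open>connected C\<close> is_interval_connected_1 is_interval_convex_1 by blast
  then have segment: "closed_segment p q \<subseteq> C"
    using p(1) q(1) by (rule closed_segment_subset[rotated 2])
  obtain c d where "c < d" "{c..d} \<subseteq> closed_segment p q" "f ` {c..d} = {a..b}"
    using exists_Icc_in_segment_image_eq_Icc[OF continuous_on_subset[OF cont segment] p(2) q(2) ab(1)] .
  with segment ab(2) show thesis
    using that[of "{c..d}"] nondegenerate_Icc by blast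
qed

definition has_split :: "(real \<Rightarrow> real) \<Rightarrow> real set \<Rightarrow> bool" where
  "has_split f K \<longleftrightarrow>
     (\<exists>S. nondegenerate S \<and> S \<subseteq> {0..1} \<and> S \<inter> K \<subseteq> {Inf K, Sup K} \<and> f ` S = f ` K)"

lemma admits_splitting_sequenceI:
  assumes "tight f T" "infinite N" "\<And>n. n \<in> N \<Longrightarrow> has_split f (T n)"
  shows "admits_splitting_sequence f"
proof -
  have "\<forall>n\<in>N. \<exists>S. nondegenerate S \<and> S \<subseteq> {0..1} \<and>
      S \<inter> T n \<subseteq> {Inf (T n), Sup (T n)} \<and> f ` S = f ` T n"
    using assms(3) unfolding has_split_def by blast
  then obtain S where "\<forall>n\<in>N. nondegenerate (S n) \<and> S n \<subseteq> {0..1} \<and>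
      S n \<inter> T n \<subseteq> {Inf (T n), Sup (T n)} \<and> f ` S n = f ` T n"
    by (rule bchoice[THEN exE])
  with assms(1,2) show ?thesis
    unfolding admits_splitting_sequence_def splitting_sequence_def by blast
qed

lemma has_split_from_cover:
  fixes f :: "real \<Rightarrow> real"
  assumes cont: "continuous_on {0..1} f" and B: "connected B" "B \<subseteq> {0..1}"
    and "nondegenerate (f ` K)" "f ` K \<subseteq> f ` B" "K \<inter> B \<subseteq> {Inf K, Sup K}"
  shows "has_split f K"
proof -
  obtain S where S: "nondegenerate S" "S \<subseteq> B" "f ` S = f ` K"
    using exists_nondegenerate_preimage[OF continuous_on_subset[OF cont B(2)] B(1) assms(4,5)] .
  have "S \<inter> K \<subseteq> {Inf K, Sup K}"
    using S(2) assms(6) by blast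
  with S B(2) show ?thesis
    unfolding has_split_def by (intro exI[of _ S]) auto
qed

lemma alternating_preimage_chain:
  fixes f :: "real \<Rightarrow> real"
  assumes cont: "continuous_on {0..1} f"
    and A: "connected A" "A \<subseteq> {0..1}" and D: "nondegenerate D" "D \<subseteq> {0..1}"
    and DA: "D \<subseteq> f ` A" and AD: "A \<subseteq> f ` D"
  obtains T where "\<And>n. nondegenerate (T n)" "\<And>n. T n \<subseteq> (if even n then D else A)"
    "\<And>n. f ` T (Suc n) = T n"
proof -
  have "connected D"
    using D(1) by (auto simp: nondegenerate_def)
  have step: "\<exists>K. (nondegenerate K \<and> K \<subseteq> (if even (Suc n) then D else A)) \<and> f ` K = J"
    if J: "nondegenerate J \<and> J \<subseteq> (if even n then D else A)" for n J
  proof (cases "even n")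
    case True
    with J DA have "J \<subseteq> f ` A"
      by auto
    then obtain K where "nondegenerate K" "K \<subseteq> A" "f ` K = J"
      using exists_nondegenerate_preimage[OF continuous_on_subset[OF cont A(2)] A(1)] J by blast
    with True show ?thesis
      by auto
  next
    case False
    with J AD have "J \<subseteq> f ` D"
      by auto
    then obtain K where "nondegenerate K" "K \<subseteq> D" "f ` K = J"
      using exists_nondegenerate_preimage[OF continuous_on_subset[OF cont D(2)] \<open>connected D\<close>] J
      by blast
    with False show ?thesis
      by auto
  qed
  have "\<exists>K. nondegenerate K \<and> K \<subseteq> (if even 0 then D else A)"
    using D(1) by auto
  from dependent_nat_choice[where Q = "\<lambda>n J K. f ` K = J", OF this step] obtain T
    where "\<forall>n. (nondegenerate (T n) \<and> T n \<subseteq> (if even n then D else A)) \<and> f ` T (Suc n) = T n"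
    by blast
  with that show thesis
    by blast
qed

lemma admits_splitting_sequence_from_covering_pair:
  fixes f :: "real \<Rightarrow> real"
  assumes cont: "continuous_on {0..1} f" and surj: "f ` {0..1} = {0..1}"
    and A: "connected A" "A \<subseteq> {0..1}" and D: "nondegenerate D" "D \<subset> {0..1}"
    and DA: "D \<subseteq> f ` A" and AD: "A \<subseteq> f ` D"
    and split: "\<And>K. nondegenerate K \<Longrightarrow> K \<subseteq> A \<Longrightarrow>
      nondegenerate (f ` K) \<Longrightarrow> f ` K \<subseteq> D \<Longrightarrow> has_split f K"
  shows "admits_splitting_sequence f"
proof -
  have "D \<subseteq> {0..1}"
    using D(2) by blast
  obtain T where nd: "\<And>n. nondegenerate (T n)" and sub: "\<And>n. T n \<subseteq> (if even n then D else A)"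
    and img: "\<And>n. f ` T (Suc n) = T n"
    using alternating_preimage_chain[OF cont A D(1) \<open>D \<subseteq> {0..1}\<close> DA AD] by blast
  have odd_step: "f ` T n \<subseteq> D" if odd: "odd n" for n
  proof -
    obtain m where "n = Suc m" "even m"
      using odd by (cases n) auto
    with img[of m] sub[of m] show ?thesis
      by simp
  qed
  have proper: "T n \<subset> {0..1}" for n
  proof (cases "even n")
    case True
    with sub[of n] D(2) show ?thesis
      by auto
  next
    case False
    have "T n \<noteq> {0..1}"
      using odd_step[OF False] surj D(2) by auto
    with False sub[of n] A(2) show ?thesis
      by auto
  qed
  have "closed_interval (T n)" for n
    using nd[of n] by (force simp: nondegenerate_def closed_interval_def)
  with proper img nd have "tight f T"
    unfolding tight_def by blast
  moreover have "infinite (range (\<lambda>m. Suc (2 * m)))"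
    by (rule range_inj_infinite) (simp add: inj_def)
  moreover have "has_split f (T (Suc (2 * m)))" for m
    by (rule split[OF nd])
      (use sub[of "2 * m"] sub[of "Suc (2 * m)"] img[of "2 * m"] nd[of "2 * m"] in auto)
  ultimately show ?thesis
    by (intro admits_splitting_sequenceI[of f T "range (\<lambda>m. Suc (2 * m))"]) auto
qed

lemma has_split_if_two_components_onto:
  fixes f :: "real \<Rightarrow> real" and D :: "real set"
  defines "X \<equiv> {x \<in> {0..1}. f x \<in> D}"
  assumes cont: "continuous_on {0..1} f"
    and C1: "C1 \<in> components X" "f ` C1 = D" and C2: "C2 \<in> components X" "f ` C2 = D"
    and "C1 \<noteq> C2"
    and K: "connected K" "K \<noteq> {}" "K \<subseteq> {0..1}" "nondegenerate (f ` K)" "f ` K \<subseteq> D"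
  shows "has_split f K"
proof -
  have "K \<subseteq> X"
    using K(3,5) by (auto simp: X_def)
  moreover from this have "X \<noteq> {}"
    using K(2) by blast
  ultimately obtain C where C: "C \<in> components X" "K \<subseteq> C"
    using exists_component_superset[OF _ _ K(1)] by blast
  obtain C' where C': "C' \<in> components X" "f ` C' = D" "C' \<noteq> C"
  proof (cases "C1 = C")
    case True
    with C2 \<open>C1 \<noteq> C2\<close> show thesis
      by (intro that[of C2]) auto
  next
    case False
    with C1 show thesis
      by (intro that[of C1]) auto
  qed
  have "C' \<inter> C = {}"
    using components_nonoverlap[OF C'(1) C(1)] C'(3) by simp
  with C(2) have "K \<inter> C' \<subseteq> {Inf K, Sup K}"
    by blast
  moreover have "connected C'" "C' \<subseteq> {0..1}"
    using in_components_connected[OF C'(1)] in_components_subset[OF C'(1)] by (auto simp: X_def)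
  ultimately show ?thesis
    using has_split_from_cover[OF cont _ _ K(4)] K(5) C'(2) by blast
qed

lemma exists_component_onto:
  fixes f :: "real \<Rightarrow> real"
  assumes cont: "continuous_on {0..1} f"
    and A: "connected A" "A \<subseteq> {0..1}" and D: "nondegenerate D" "D \<subseteq> f ` A"
  shows "\<exists>C \<in> components {x \<in> {0..1}. f x \<in> D}. f ` C = D"
proof -
  obtain K where K: "nondegenerate K" "K \<subseteq> A" "f ` K = D"
    using exists_nondegenerate_preimage[OF continuous_on_subset[OF cont A(2)] A(1) D] .
  then have "K \<subseteq> {x \<in> {0..1}. f x \<in> D}" "connected K" "K \<noteq> {}"
    using A(2) by (auto simp: nondegenerate_def)
  then obtain C where C: "C \<in> components {x \<in> {0..1}. f x \<in> D}" "K \<subseteq> C"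
    using exists_component_superset by blast
  moreover have "f ` C \<subseteq> D"
    using in_components_subset[OF C(1)] by auto
  ultimately show ?thesis
    using K(3) by blast
qed

lemma unique_component_onto:
  fixes f :: "real \<Rightarrow> real"
  assumes cont: "continuous_on {0..1} f" and surj: "f ` {0..1} = {0..1}"
    and nos: "\<not> admits_splitting_sequence f"
    and A: "connected A" "A \<subseteq> {0..1}" and D: "nondegenerate D" "D \<subset> {0..1}"
    and DA: "D \<subseteq> f ` A" and AD: "A \<subseteq> f ` D"
  shows "\<exists>!C. C \<in> components {x \<in> {0..1}. f x \<in> D} \<and> f ` C = D"
proof -
  have "C1 = C2"
    if "C1 \<in> components {x \<in> {0..1}. f x \<in> D}" "f ` C1 = D"
      and "C2 \<in> components {x \<in> {0..1}. f x \<in> D}" "f ` C2 = D" for C1 C2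
  proof (rule ccontr)
    assume "C1 \<noteq> C2"
    have "admits_splitting_sequence f"
    proof (rule admits_splitting_sequence_from_covering_pair[OF cont surj A D DA AD])
      fix K assume "nondegenerate K" "K \<subseteq> A" "nondegenerate (f ` K)" "f ` K \<subseteq> D"
      with that \<open>C1 \<noteq> C2\<close> A(2) show "has_split f K"
        by (intro has_split_if_two_components_onto[OF cont, of C1 D C2])
          (auto simp: nondegenerate_def)
    qed
    with nos show False ..
  qed
  with exists_component_onto[OF cont A D(1) DA] show ?thesis
    by blast
qed

lemma admits_splitting_sequence_from_adjacent_cover:
  fixes f :: "real \<Rightarrow> real"
  assumes cont: "continuous_on {0..1} f" and surj: "f ` {0..1} = {0..1}"
    and A: "{a1..a2} \<subseteq> {0..1}" and D: "nondegenerate D" "D \<subset> {0..1}"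
    and DA: "D \<subseteq> f ` {a1..a2}" and AD: "{a1..a2} \<subseteq> f ` D"
    and B: "connected B" "B \<subseteq> {0..1}" "{a1..a2} \<inter> B \<subseteq> {a1, a2}" "D \<subseteq> f ` B"
  shows "admits_splitting_sequence f"
proof (rule admits_splitting_sequence_from_covering_pair[OF cont surj _ A D DA AD])
  fix K assume K: "nondegenerate K" "K \<subseteq> {a1..a2}" "nondegenerate (f ` K)" "f ` K \<subseteq> D"
  obtain k1 k2 where k: "k1 < k2" "K = {k1..k2}"
    using K(1) by (auto simp: nondegenerate_def)
  have "K \<inter> B \<subseteq> {a1, a2}"
    using B(3) K(2) by blast
  moreover have "a1 \<le> k1" "k2 \<le> a2"
    using K(2) k by auto
  ultimately have "K \<inter> B \<subseteq> {Inf K, Sup K}"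
    using k by fastforce
  then show "has_split f K"
    using has_split_from_cover[OF cont B(1,2) K(3)] K(4) B(4) by blast
qed simp

lemma Icc_psubset_unit_interval:
  fixes a b :: real
  assumes "0 \<le> a" "b \<le> 1" "0 < a \<or> b < 1"
  shows "{a..b} \<subset> {0..1}"
proof -
  have "0 \<notin> {a..b} \<or> 1 \<notin> {a..b}"
    using assms by auto
  with assms(1,2) show ?thesis
    by fastforce
qed

lemma two_cycle_commute: "two_cycle f s t \<longleftrightarrow> two_cycle f t s"
  unfolding two_cycle_def by auto

lemma closed_segment_subset_image_two_cycles:
  fixes f :: "real \<Rightarrow> real"
  assumes "continuous_on {0..1} f" "two_cycle f s t" "two_cycle f u v"
  shows "closed_segment s u \<subseteq> f ` closed_segment t v"
  using closed_segment_image_subset[OF assms(1), of t v] assms(2,3) by (simp add: two_cycle_def)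

lemma two_cycles_nested:
  fixes f :: "real \<Rightarrow> real"
  assumes cont: "continuous_on {0..1} f" and surj: "f ` {0..1} = {0..1}"
    and nos: "\<not> admits_splitting_sequence f"
    and st: "two_cycle f s t" and uv: "two_cycle f u v" and "s < t" "u < v" "s < u"
  shows "v < t"
proof (rule ccontr)
  assume "\<not> v < t"
  have unit: "s \<in> {0..1}" "t \<in> {0..1}" "u \<in> {0..1}" "v \<in> {0..1}"
    using st uv by (auto simp: two_cycle_def)
  have "t \<noteq> v" "t \<noteq> u"
    using st uv \<open>s < u\<close> \<open>u < v\<close> unfolding two_cycle_def by auto
  with \<open>\<not> v < t\<close> have "t < v"
    by simp
  consider "t < u" | "u < t"
    using \<open>t \<noteq> u\<close> by linarith
  then have "admits_splitting_sequence f"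
  proof cases
    case 1
    have "closed_segment s t \<subseteq> f ` closed_segment t s"
      "closed_segment s v \<subseteq> f ` closed_segment t u"
      using closed_segment_subset_image_two_cycles[OF cont] st uv two_cycle_commute by blast+
    with 1 \<open>s < t\<close> \<open>t < v\<close> have "{s..t} \<subseteq> f ` {s..t}" "{s..t} \<subseteq> f ` {t..u}"
      by (auto simp: closed_segment_eq_real_ivl)
    with 1 unit \<open>s < t\<close> show ?thesis
      by (intro admits_splitting_sequence_from_adjacent_cover[OF cont surj, of s t "{s..t}" "{t..u}"])
        (auto intro: nondegenerate_Icc Icc_psubset_unit_interval)
  next
    case 2
    have "closed_segment t v \<subseteq> f ` closed_segment s u"
      "closed_segment s u \<subseteq> f ` closed_segment t v"
      "closed_segment v s \<subseteq> f ` closed_segment u t"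
      using closed_segment_subset_image_two_cycles[OF cont] st uv two_cycle_commute by blast+
    with 2 \<open>s < u\<close> \<open>t < v\<close>
    have "{t..v} \<subseteq> f ` {s..u}" "{s..u} \<subseteq> f ` {t..v}" "{t..v} \<subseteq> f ` {u..t}"
      by (auto simp: closed_segment_eq_real_ivl)
    with 2 unit \<open>s < u\<close> \<open>t < v\<close> show ?thesis
      by (intro admits_splitting_sequence_from_adjacent_cover[OF cont surj, of s u "{t..v}" "{u..t}"])
        (auto intro: nondegenerate_Icc Icc_psubset_unit_interval)
  qed
  with nos show False
    by contradiction
qed

theorem lemma3p14:
  fixes f :: "real \<Rightarrow> real" and s t u v :: real
  assumes "continuous_on {0..1} f"
    and "f ` {0..1} = {0..1}"
    and "\<not> admits_splitting_sequence f"
    and "two_cycle f s t" and "two_cycle f u v"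
    and "s < t" and "u < v" and "s < u"
  shows "(\<exists>!C. C \<in> components {x \<in> {0..1}. f x \<in> {s..u}} \<and> f ` C = {s..u}) \<and>
         (\<exists>!C'. C' \<in> components {x \<in> {0..1}. f x \<in> {v..t}} \<and> f ` C' = {v..t})"
proof -
  have unit: "s \<in> {0..1}" "t \<in> {0..1}" "u \<in> {0..1}" "v \<in> {0..1}"
    using assms(4,5) by (auto simp: two_cycle_def)
  have "v < t"
    using two_cycles_nested[OF assms] .
  have "closed_segment s u \<subseteq> f ` closed_segment t v"
    "closed_segment t v \<subseteq> f ` closed_segment s u"
    using closed_segment_subset_image_two_cycles[OF assms(1)] assms(4,5) two_cycle_commute by blast+
  with \<open>s < u\<close> \<open>v < t\<close>
  have su_tv: "{s..u} \<subseteq> f ` {v..t}" and tv_su: "{v..t} \<subseteq> f ` {s..u}"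
    by (auto simp: closed_segment_eq_real_ivl)
  have "\<exists>!C. C \<in> components {x \<in> {0..1}. f x \<in> {s..u}} \<and> f ` C = {s..u}"
    using unit \<open>s < u\<close> \<open>u < v\<close>
    by (intro unique_component_onto[OF assms(1-3) _ _ _ _ su_tv tv_su])
      (auto intro: nondegenerate_Icc Icc_psubset_unit_interval)
  moreover have "\<exists>!C'. C' \<in> components {x \<in> {0..1}. f x \<in> {v..t}} \<and> f ` C' = {v..t}"
    using unit \<open>s < u\<close> \<open>u < v\<close> \<open>v < t\<close>
    by (intro unique_component_onto[OF assms(1-3) _ _ _ _ tv_su su_tv])
      (auto intro: nondegenerate_Icc Icc_psubset_unit_interval)
  ultimately show ?thesis ..
qed

end
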